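(* Let $\boldsymbol X \in \mathbb{R}^{n\times d}$, $\boldsymbol y \in \mathbb{R}^n$, $\boldsymbol M = \boldsymbol X^\top \boldsymbol X$, $\boldsymbol r = \boldsymbol X^\top \boldsymbol y$. Assume (A1) $\boldsymbol r > \mathbf 0$ and (A2) $M_{ij}\le 0$ for all $i\neq j$. Let $\boldsymbol C>\mathbf 0$, $\boldsymbol k>\mathbf 0$ in $\mathbb{R}^d$, and for $\varepsilon>0$ let $\boldsymbol\theta^{(\varepsilon)}(t)$ solve $$\frac{\mathrm d \theta_i}{\mathrm d t} = \theta_i\Big(r_i - \sum_{j=1}^d M_{ij}\theta_j\Big),\quad i=1,\dots,d,$$ with $\boldsymbol\theta^{(\varepsilon)}(0) = (C_1\varepsilon^{k_1},\dots,C_d\varepsilon^{k_d})$. Using the rescaled time $s$ with $t = s\log\frac1\varepsilon$, define $w_i^{(\varepsilon)}(s) = \frac{\log\theta_i^{(\varepsilon)}(s\log\frac1\varepsilon)}{\log\varepsilon}$ and $\boldsymbol z^{(\varepsilon)}(s) = \int_0^s \boldsymbol\theta^{(\varepsilon)}(u\log\tfrac1\varepsilon)\,\mathrm du$. For $s\ge0$, let $(\boldsymbol w(s),\boldsymbol z(s))\in(\mathbb{R}^d)^2$ be the unique solution of the linear complementarity problem $$\boldsymbol w = \boldsymbol k - s\boldsymbol r + \boldsymbol M\boldsymbol z,\qquad \boldsymbol w\ge\mathbf 0,\quad \boldsymbol z\ge \mathbf 0,\quad \boldsymbol w^\top\boldsymbol z = 0.$$ Then $\boldsymbol w^{(\varepsilon)}(s)\to\boldsymbol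 w(s)$ and $\boldsymbol z^{(\varepsilon)}(s)\to\boldsymbol z(s)$ as $\varepsilon\to0$, uniformly for $s$ in compact subsets of $\mathbb{R}_{\ge0}$.
   Context: Vector inequalities are coordinatewise. Under (A1)–(A2), $\boldsymbol M$ is symmetric positive definite, so the linear complementarity problem above has a unique solution for each $s$. *)

theory Defs
  imports "HOL-Analysis.Analysis"
begin

end

theory Submission
  imports Defs "HOL-Real_Asymp.Real_Asymp"
begin

(* With L = ln (1/eps), put Z(s) = integral of theta(u L) over [0, s]. Integrating the
   logarithmic derivative of the Lotka-Volterra system gives
   theta_i(s L) = C_i exp (- L (k - s r + M Z(s))_i); hence the log-rescaled trajectory is
   k - s r + M Z(s) - (ln C)/L, and Z solves Z' = C exp (- L (k - s r + M Z)).
   For large L this exponential forces Z to track the LCP path z: with p > 0 and M p >= 1,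
   a first crossing of the barrier z + eta (1 + s) p from below, or of z - eta p from above,
   is ruled out by the Z-matrix sign pattern and by complementarity respectively. So Z -> z
   uniformly on compact intervals, and the log-rescaled trajectory -> k - s r + M z = w. *)

section \<open>Z-matrices and the parametric LCP\<close>

definition Z_matrix :: "real^'n^'n \<Rightarrow> bool" where
  "Z_matrix M \<longleftrightarrow> (\<forall>i j. i \<noteq> j \<longrightarrow> M $ i $ j \<le> 0)"

definition lcp_solution :: "real^'n^'n \<Rightarrow> real^'n \<Rightarrow> real^'n \<Rightarrow> real^'n \<Rightarrow> bool" where
  "lcp_solution M q w z \<longleftrightarrow>
     w = q + M *v z \<and> (\<forall>i. 0 \<le> w $ i) \<and> (\<forall>i. 0 \<le> z $ i) \<and> w \<bullet> z = 0"

lemma lcp_solution_complementary: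
  assumes "lcp_solution M q w z"
  shows "w $ i * z $ i = 0"
proof -
  obtain w_nonneg: "\<forall>j. 0 \<le> w $ j" and z_nonneg: "\<forall>j. 0 \<le> z $ j" and "w \<bullet> z = 0"
    using assms unfolding lcp_solution_def by blast
  then have "(\<Sum>j\<in>UNIV. w $ j * z $ j) = 0"
    by (simp add: inner_vec_def)
  moreover have "\<forall>j\<in>UNIV. 0 \<le> w $ j * z $ j"
    using w_nonneg z_nonneg by simp
  ultimately show ?thesis
    using sum_nonneg_eq_0_iff[of UNIV "\<lambda>j. w $ j * z $ j"] by simp
qed

lemma Z_matrix_row_le_if_touching:
  assumes M: "Z_matrix M" and le: "\<And>j. a $ j \<le> c $ j" and eq: "a $ i = c $ i"
  shows "(M *v c) $ i \<le> (M *v a) $ i"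
proof -
  have "M $ i $ j * c $ j \<le> M $ i $ j * a $ j" for j
  proof (cases "j = i")
    case False
    then show ?thesis
      using M le[of j] by (intro mult_left_mono_neg) (auto simp: Z_matrix_def)
  qed (simp add: eq)
  then show ?thesis
    unfolding matrix_vector_mult_def by (simp add: sum_mono)
qed

lemma obtain_max_ratio:
  fixes a b p :: "real^'n"
  assumes p: "\<And>j. 0 < p $ j"
  obtains i m where "\<And>j. a $ j \<le> b $ j + m * p $ j" and "a $ i = b $ i + m * p $ i"
proof -
  define ratio where "ratio j = (a $ j - b $ j) / p $ j" for j
  have "Max (range ratio) \<in> range ratio"
    by (rule Max_in) auto
  then obtain i where i: "Max (range ratio) = ratio i"
    by blast
  have max: "ratio j \<le> ratio i" for j
    unfolding i[symmetric] by (rule Max_ge) auto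
  have "a $ j - b $ j \<le> ratio i * p $ j" for j
    using max[of j] p[of j] by (simp add: ratio_def[of j] pos_divide_le_eq)
  then have "a $ j \<le> b $ j + ratio i * p $ j" for j
    by (simp add: algebra_simps)
  moreover have "a $ i = b $ i + ratio i * p $ i"
    using p[of i] by (simp add: ratio_def)
  ultimately show thesis
    by (rule that)
qed

lemma first_time_some_nonneg:
  fixes g :: "'i::finite \<Rightarrow> real \<Rightarrow> real"
  assumes cont: "\<And>j. continuous_on {0..S} (g j)" and start: "\<And>j. g j 0 < 0"
    and reach: "s0 \<in> {0..S}" "0 \<le> g j0 s0"
  obtains s1 j where "0 < s1" "s1 \<le> S" "0 \<le> g j s1" "\<And>s j. 0 \<le> s \<Longrightarrow> s < s1 \<Longrightarrow> g j s < 0"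
proof -
  define B where "B = (\<Union>j. {s \<in> {0..S}. 0 \<le> g j s})"
  have "closed B"
    unfolding B_def
    by (intro closed_UN ballI continuous_on_closed_Collect_le[OF continuous_on_const cont]) auto
  moreover have "B \<noteq> {}" "bdd_below B"
    using reach by (auto simp: B_def bdd_below_def)
  ultimately have "Inf B \<in> B"
    by (intro closed_contains_Inf)
  then obtain j where j: "Inf B \<in> {0..S}" "0 \<le> g j (Inf B)"
    by (auto simp: B_def)
  have before: "g j' s < 0" if "0 \<le> s" "s < Inf B" for s j'
  proof (rule ccontr)
    assume "\<not> g j' s < 0"
    then have "s \<in> B"
      using that j(1) by (auto simp: B_def not_less)
    then show False
      using cInf_lower[OF _ \<open>bdd_below B\<close>] that(2) by fastforce
  qed
  have "Inf B \<noteq> 0"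
    using j(2) start[of j] by auto
  with j before show thesis
    by (intro that[of "Inf B" j]) auto
qed

text \<open>At the first crossing time pick the coordinate i maximising (a - b)/p; then
  a \<le> b + m p with equality at i, and the Z-matrix sign pattern transfers this to row i.\<close>
lemma Z_matrix_first_touch:
  fixes a b :: "real \<Rightarrow> real^'n"
  assumes M: "Z_matrix M" and p: "\<And>j. 0 < p $ j"
    and cont: "continuous_on {0..S} a" "continuous_on {0..S} b"
    and start: "\<And>j. a 0 $ j < b 0 $ j"
    and reach: "s0 \<in> {0..S}" "b s0 $ j0 \<le> a s0 $ j0"
  obtains s1 i m where "0 < s1" "s1 \<le> S" "0 \<le> m" "a s1 $ i = b s1 $ i + m * p $ i"
    "(M *v b s1) $ i + m * (M *v p) $ i \<le> (M *v a s1) $ i"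
    "\<And>s. 0 \<le> s \<Longrightarrow> s < s1 \<Longrightarrow> a s $ i < b s $ i"
proof -
  have cont': "continuous_on {0..S} (\<lambda>s. a s $ j - b s $ j)" for j
    using cont by (intro continuous_intros)
  have start': "a 0 $ j - b 0 $ j < 0" for j
    using start[of j] by simp
  have reach': "0 \<le> a s0 $ j0 - b s0 $ j0"
    using reach(2) by simp
  obtain s1 j where s1: "0 < s1" "s1 \<le> S" "0 \<le> a s1 $ j - b s1 $ j"
    and before: "\<And>s j. 0 \<le> s \<Longrightarrow> s < s1 \<Longrightarrow> a s $ j - b s $ j < 0"
    using first_time_some_nonneg[where g = "\<lambda>j s. a s $ j - b s $ j", OF cont' start' reach(1) reach']
    by blast
  obtain i m where le: "\<And>j. a s1 $ j \<le> b s1 $ j + m * p $ j" and eq: "a s1 $ i = b s1 $ i + m * p $ i"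
    using obtain_max_ratio[OF p, of "a s1" "b s1"] by blast
  have "0 \<le> m * p $ j"
    using le[of j] s1(3) by simp
  then have "0 \<le> m"
    using p[of j] by (simp add: zero_le_mult_iff)
  moreover have "(M *v (b s1 + m *\<^sub>R p)) $ i \<le> (M *v a s1) $ i"
    using le eq by (intro Z_matrix_row_le_if_touching[OF M]) auto
  then have "(M *v b s1) $ i + m * (M *v p) $ i \<le> (M *v a s1) $ i"
    by (simp add: matrix_vector_right_distrib matrix_vector_mult_scaleR)
  moreover have "a s $ i < b s $ i" if "0 \<le> s" "s < s1" for s
    using before[OF that, of i] by simp
  ultimately show thesis
    using that s1(1,2) eq by blast
qed

locale Z_matrix_lcp_path =
  fixes M :: "real^'n^'n" and r k :: "real^'n" and w z :: "real \<Rightarrow> real^'n"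
  assumes Z_matrix: "Z_matrix M"
    and r_pos: "\<And>i. 0 < r $ i"
    and k_pos: "\<And>i. 0 < k $ i"
    and lcp: "\<And>s. 0 \<le> s \<Longrightarrow> lcp_solution M (k - s *\<^sub>R r) (w s) (z s)"
begin

lemma w_eq: "0 \<le> s \<Longrightarrow> w s = k - s *\<^sub>R r + M *v z s"
  using lcp by (simp add: lcp_solution_def)

lemma w_nonneg: "0 \<le> s \<Longrightarrow> 0 \<le> w s $ i"
  using lcp unfolding lcp_solution_def by blast

lemma z_nonneg: "0 \<le> s \<Longrightarrow> 0 \<le> z s $ i"
  using lcp unfolding lcp_solution_def by blast

lemma w_eq_0_if_z_pos:
  assumes "0 \<le> s" "0 < z s $ i"
  shows "w s $ i = 0"
  using lcp_solution_complementary[OF lcp[OF assms(1)], of i] assms(2) by simp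

text \<open>Solvability for all s already makes M a nonsingular M-matrix: for large s the
  constraint w(s) \<ge> 0 forces M z(s) \<ge> 2, and moving z(s) into the open positive orthant
  costs at most 1 in each row.\<close>
lemma obtain_semipositive_vector:
  obtains p where "\<And>i. 0 < p $ i" and "\<And>i. 1 \<le> (M *v p) $ i"
proof -
  define s where "s = (\<Sum>i\<in>UNIV. (k $ i + 2) / r $ i)"
  have ratio_pos: "0 < (k $ i + 2) / r $ i" for i
    using k_pos[of i] r_pos[of i] by simp
  have ratio_le: "(k $ i + 2) / r $ i \<le> s" for i
    unfolding s_def using ratio_pos by (intro member_le_sum) (auto intro: less_imp_le)
  have "0 \<le> s"
    using ratio_le ratio_pos by (meson less_imp_le order_trans)
  have Mz: "2 \<le> (M *v z s) $ i" for i
    using ratio_le[of i] r_pos[of i] w_nonneg[OF \<open>0 \<le> s\<close>, of i]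
    by (simp add: w_eq[OF \<open>0 \<le> s\<close>] pos_divide_le_eq)
  define A where "A = (\<Sum>i\<in>UNIV. \<Sum>j\<in>UNIV. \<bar>M $ i $ j\<bar>)"
  have row_le: "- (\<Sum>j\<in>UNIV. M $ i $ j) \<le> A" for i
  proof -
    have "- (\<Sum>j\<in>UNIV. M $ i $ j) \<le> (\<Sum>j\<in>UNIV. \<bar>M $ i $ j\<bar>)"
      by (simp add: sum_negf[symmetric] sum_mono)
    also have "\<dots> \<le> A"
      unfolding A_def by (rule member_le_sum) auto
    finally show ?thesis .
  qed
  have "0 \<le> A"
    unfolding A_def by (intro sum_nonneg) auto
  define p where "p = z s + (\<chi> j. 1 / (A + 1))"
  show thesis
  proof
    show "0 < p $ i" for i
      using z_nonneg[OF \<open>0 \<le> s\<close>, of i] \<open>0 \<le> A\<close> by (simp add: p_def add_nonneg_pos)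
    show "1 \<le> (M *v p) $ i" for i
    proof -
      have "(M *v p) $ i = (M *v z s) $ i + (\<Sum>j\<in>UNIV. M $ i $ j) / (A + 1)"
        by (simp add: p_def matrix_vector_mult_def distrib_left sum.distrib sum_divide_distrib)
      moreover have "- 1 \<le> (\<Sum>j\<in>UNIV. M $ i $ j) / (A + 1)"
        using row_le[of i] \<open>0 \<le> A\<close> by (simp add: le_divide_eq)
      ultimately show ?thesis
        using Mz[of i] by linarith
    qed
  qed
qed

lemma z_least:
  assumes s: "0 \<le> s" and \<zeta>: "\<And>j. 0 \<le> \<zeta> $ j" "\<And>j. 0 \<le> (k - s *\<^sub>R r + M *v \<zeta>) $ j"
  shows "z s $ i \<le> \<zeta> $ i"
proof (rule ccontr)
  assume gt: "\<not> z s $ i \<le> \<zeta> $ i"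
  obtain p where p: "\<And>j. 0 < p $ j" and Mp: "\<And>j. 1 \<le> (M *v p) $ j"
    using obtain_semipositive_vector by blast
  obtain l m where le: "\<And>j. z s $ j \<le> \<zeta> $ j + m * p $ j" and eq: "z s $ l = \<zeta> $ l + m * p $ l"
    using obtain_max_ratio[OF p, of "z s" \<zeta>] by blast
  have "0 < m * p $ i"
    using gt le[of i] by simp
  then have "0 < m"
    using p[of i] by (simp add: zero_less_mult_iff)
  then have "0 < z s $ l"
    using eq \<zeta>(1)[of l] p[of l] by (simp add: add_nonneg_pos)
  then have "w s $ l = 0"
    using w_eq_0_if_z_pos[OF s] by blast
  have "(M *v (\<zeta> + m *\<^sub>R p)) $ l \<le> (M *v z s) $ l"
    using le eq by (intro Z_matrix_row_le_if_touching[OF Z_matrix]) auto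
  moreover have "0 < m * (M *v p) $ l"
    using \<open>0 < m\<close> Mp[of l] by simp
  ultimately show False
    using \<open>w s $ l = 0\<close> \<zeta>(2)[of l]
    by (simp add: w_eq[OF s] matrix_vector_right_distrib matrix_vector_mult_scaleR)
qed

lemma z_mono:
  assumes "0 \<le> s" "s \<le> s'"
  shows "z s $ i \<le> z s' $ i"
proof (rule z_least)
  show "0 \<le> (k - s *\<^sub>R r + M *v z s') $ j" for j
    using w_nonneg[of s' j] assms mult_right_mono[OF assms(2) less_imp_le[OF r_pos[of j]]]
    by (simp add: w_eq)
qed (use assms z_nonneg in auto)

lemma z_at_0: "z 0 = 0"
proof -
  have "z 0 $ i \<le> (0::real^'n) $ i" for i
    by (rule z_least) (use k_pos in \<open>auto intro: less_imp_le\<close>)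
  then show ?thesis
    using z_nonneg[of 0] by (simp add: vec_eq_iff order_antisym)
qed

lemma z_growth_le:
  assumes p: "\<And>j. 0 < p $ j" and Mp: "\<And>j. 1 \<le> (M *v p) $ j" and \<rho>: "\<And>i. r $ i \<le> \<rho>"
    and s: "0 \<le> s" "s \<le> s'"
  shows "z s' $ j \<le> z s $ j + (s' - s) * \<rho> * p $ j"
proof -
  have "0 \<le> \<rho>"
    using \<rho>[of j] r_pos[of j] by simp
  have "z s' $ j \<le> (z s + ((s' - s) * \<rho>) *\<^sub>R p) $ j"
  proof (rule z_least)
    show "0 \<le> (z s + ((s' - s) * \<rho>) *\<^sub>R p) $ i" for i
      using z_nonneg[of s i] p[of i] s \<open>0 \<le> \<rho>\<close> by simp
    show "0 \<le> (k - s' *\<^sub>R r + M *v (z s + ((s' - s) * \<rho>) *\<^sub>R p)) $ i" for i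
    proof -
      have "(s' - s) * r $ i \<le> (s' - s) * \<rho>"
        using \<rho> s by (intro mult_left_mono) auto
      also have "\<dots> \<le> (s' - s) * \<rho> * (M *v p) $ i"
        using mult_left_mono[OF Mp[of i], of "(s' - s) * \<rho>"] s \<open>0 \<le> \<rho>\<close> by simp
      finally show ?thesis
        using w_nonneg[of s i] s
        by (simp add: w_eq matrix_vector_right_distrib matrix_vector_mult_scaleR algebra_simps)
    qed
  qed (use s in auto)
  then show ?thesis
    by simp
qed

lemma z_lipschitz: obtains \<Lambda> where "\<Lambda>-lipschitz_on {0..} z"
proof -
  obtain p where p: "\<And>j. 0 < p $ j" and Mp: "\<And>j. 1 \<le> (M *v p) $ j"
    using obtain_semipositive_vector by blast
  define \<rho> where "\<rho> = (\<Sum>i\<in>UNIV. r $ i)"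
  have \<rho>: "r $ i \<le> \<rho>" for i
    unfolding \<rho>_def using r_pos by (intro member_le_sum) (auto intro: less_imp_le)
  define \<Lambda> where "\<Lambda> = \<rho> * (\<Sum>j\<in>UNIV. p $ j)"
  have step: "norm (z s' - z s) \<le> \<Lambda> * (s' - s)" if "0 \<le> s" "s \<le> s'" for s s'
  proof -
    have "\<bar>(z s' - z s) $ j\<bar> \<le> (s' - s) * \<rho> * p $ j" for j
      using z_growth_le[OF p Mp \<rho> that, of j] z_mono[OF that, of j] by simp
    then have "norm (z s' - z s) \<le> (\<Sum>j\<in>UNIV. (s' - s) * \<rho> * p $ j)"
      by (intro order_trans[OF norm_le_l1_cart] sum_mono)
    then show ?thesis
      by (simp add: \<Lambda>_def sum_distrib_left algebra_simps)
  qed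
  have "0 \<le> \<Lambda>"
    using \<rho>[of undefined] r_pos[of undefined] p
    by (simp add: \<Lambda>_def sum_nonneg less_imp_le)
  have "\<Lambda>-lipschitz_on {0..} z"
  proof (rule lipschitz_onI)
    fix s s' :: real assume "s \<in> {0..}" "s' \<in> {0..}"
    then show "dist (z s) (z s') \<le> \<Lambda> * dist s s'"
    proof (cases "s \<le> s'")
      case True
      then show ?thesis
        using step[of s s'] \<open>s \<in> {0..}\<close> by (simp add: dist_commute dist_norm)
    next
      case False
      then show ?thesis
        using step[of s' s] \<open>s' \<in> {0..}\<close> by (simp add: dist_norm)
    qed
  qed fact
  then show thesis
    by (rule that)
qed

lemma continuous_on_z: "continuous_on {0..S} z"
proof -
  obtain \<Lambda> where "\<Lambda>-lipschitz_on {0..} z"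
    using z_lipschitz by blast
  then show ?thesis
    by (rule continuous_on_subset[OF lipschitz_on_continuous_on]) auto
qed

end

lemma has_real_derivative_left_secant_less:
  assumes f: "(f has_real_derivative D) (at x within {a..b})" and x: "a < x" "x \<le> b" and "D < c"
  obtains y where "a \<le> y" "y < x" "f x - f y < c * (x - y)"
proof -
  have "((\<lambda>y. (f y - f x) / (y - x)) \<longlongrightarrow> D) (at x within {a..b})"
    using f by (simp add: has_field_derivative_iff)
  then have "\<forall>\<^sub>F y in at x within {a..b}. (f y - f x) / (y - x) < c"
    using \<open>D < c\<close> by (rule order_tendstoD)
  then obtain d where "0 < d"
    and d: "\<And>y. y \<in> {a..b} \<Longrightarrow> y \<noteq> x \<Longrightarrow> dist y x < d \<Longrightarrow> (f y - f x) / (y - x) < c"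
    by (auto simp: eventually_at)
  define y where "y = max a (x - d / 2)"
  have y: "a \<le> y" "y < x" "y \<in> {a..b}" "dist y x < d"
    using x \<open>0 < d\<close> by (auto simp: y_def dist_real_def)
  then have "(f y - f x) / (y - x) < c"
    using d by auto
  then have "c * (y - x) < f y - f x"
    using y(2) by (simp add: neg_divide_less_eq mult.commute)
  with y show thesis
    by (intro that[of y]) (auto simp: algebra_simps)
qed

lemma has_real_derivative_left_secant_greater:
  assumes f: "(f has_real_derivative D) (at x within {a..b})" and x: "a < x" "x \<le> b" and "c < D"
  obtains y where "a \<le> y" "y < x" "c * (x - y) < f x - f y"
proof -
  have "((\<lambda>x. - f x) has_real_derivative - D) (at x within {a..b})"
    using f by (rule DERIV_minus)
  moreover have "- D < - c"
    using \<open>c < D\<close> by simp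
  ultimately obtain y where "a \<le> y" "y < x" "- f x - - f y < - c * (x - y)"
    using has_real_derivative_left_secant_less[OF _ x] by blast
  then show thesis
    by (intro that[of y]) auto
qed

lemma has_vector_derivative_vec_nth:
  "(f has_vector_derivative f') F \<Longrightarrow> ((\<lambda>x. f x $ i) has_real_derivative f' $ i) F"
  unfolding has_real_derivative_iff_has_vector_derivative
  using bounded_linear.has_vector_derivative[OF bounded_linear_vec_nth] by auto

lemma has_vector_derivative_time_scaled:
  assumes \<Theta>: "\<And>t. 0 \<le> t \<Longrightarrow> (\<Theta> has_vector_derivative F (\<Theta> t)) (at t within {0..})"
    and "0 \<le> L" "0 \<le> u"
  shows "((\<lambda>u. \<Theta> (u * L)) has_vector_derivative L *\<^sub>R F (\<Theta> (u * L))) (at u within {0..})"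
proof -
  have "((\<lambda>u. u * L) has_vector_derivative L) (at u within {0..})"
    by (auto intro!: derivative_eq_intros simp flip: has_real_derivative_iff_has_vector_derivative)
  moreover have "(\<Theta> has_vector_derivative F (\<Theta> (u * L))) (at (u * L) within {0..})"
    using assms(2,3) by (intro \<Theta>) simp
  then have "(\<Theta> has_vector_derivative F (\<Theta> (u * L))) (at (u * L) within (\<lambda>u. u * L) ` {0..})"
    by (rule has_vector_derivative_within_subset) (use assms(2) in auto)
  ultimately show ?thesis
    using vector_diff_chain_within by (fastforce simp: o_def)
qed

section \<open>Rescaled Lotka--Volterra trajectories\<close>

lemma lotka_volterra_exp_integral:
  fixes \<phi> Z :: "real \<Rightarrow> real^'n"
  assumes \<phi>: "\<And>u. u \<in> {0..S} \<Longrightarrow>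
      (\<phi> has_vector_derivative L *\<^sub>R (\<chi> i. \<phi> u $ i * (r $ i - (M *v \<phi> u) $ i))) (at u within {0..S})"
    and Z: "\<And>u. u \<in> {0..S} \<Longrightarrow> (Z has_vector_derivative \<phi> u) (at u within {0..S})"
    and "Z 0 = 0" and s: "s \<in> {0..S}"
  shows "\<phi> s $ i = \<phi> 0 $ i * exp (L * (s * r $ i - (M *v Z s) $ i))"
proof -
  define h where "h u = \<phi> u $ i * exp (- L * (u * r $ i - (M *v Z u) $ i))" for u
  have "(h has_real_derivative 0) (at u within {0..S})" if u: "u \<in> {0..S}" for u
  proof -
    have MZ: "((\<lambda>u. (M *v Z u) $ i) has_real_derivative (M *v \<phi> u) $ i) (at u within {0..S})"
      using bounded_linear.has_vector_derivative[OF matrix_vector_mul_bounded_linear Z[OF u]]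
      by (rule has_vector_derivative_vec_nth)
    have "(h has_real_derivative
        L * (\<phi> u $ i * (r $ i - (M *v \<phi> u) $ i)) * exp (- L * (u * r $ i - (M *v Z u) $ i))
        + \<phi> u $ i * (exp (- L * (u * r $ i - (M *v Z u) $ i)) * (- L * (r $ i - (M *v \<phi> u) $ i))))
        (at u within {0..S})"
      unfolding h_def
      using has_vector_derivative_vec_nth[OF \<phi>[OF u], of i] MZ
      by (auto intro!: derivative_eq_intros)
    then show ?thesis
      by (simp add: algebra_simps)
  qed
  then obtain c where "\<forall>u\<in>{0..S}. h u = c"
    using has_field_derivative_zero_constant[of "{0..S}" h] by auto
  then have "h s = h 0"
    using s by auto
  then have "\<phi> 0 $ i * exp (L * (s * r $ i - (M *v Z s) $ i))
      = \<phi> s $ i * (exp (- L * (s * r $ i - (M *v Z s) $ i)) * exp (L * (s * r $ i - (M *v Z s) $ i)))"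
    by (simp add: h_def \<open>Z 0 = 0\<close>)
  then show ?thesis
    by (simp flip: exp_add)
qed

text \<open>If \<theta> solves the Lotka--Volterra system with \<theta>(0) = C exp(-L k), then
  s \<mapsto> integral {0..s} (\<lambda>u. \<theta> (u L)) satisfies this predicate.\<close>
definition lv_primitive ::
  "real^'n^'n \<Rightarrow> real^'n \<Rightarrow> real^'n \<Rightarrow> real^'n \<Rightarrow> real \<Rightarrow> real \<Rightarrow> (real \<Rightarrow> real^'n) \<Rightarrow> bool" where
  "lv_primitive M r k C L S Z \<longleftrightarrow> Z 0 = 0 \<and>
     (\<forall>s\<in>{0..S}. (Z has_vector_derivative (\<chi> i. C $ i * exp (- L * (k - s *\<^sub>R r + M *v Z s) $ i)))
        (at s within {0..S}))"

lemma lotka_volterra_rescaled: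
  fixes \<Theta> :: "real \<Rightarrow> real^'n"
  assumes ode: "\<And>t. 0 \<le> t \<Longrightarrow> (\<Theta> has_vector_derivative
      (\<chi> i. \<Theta> t $ i * (r $ i - (\<Sum>j\<in>UNIV. M $ i $ j * \<Theta> t $ j)))) (at t within {0..})"
    and init: "\<Theta> 0 = (\<chi> i. C $ i * exp (- L * k $ i))" and "0 \<le> L"
  defines "Z \<equiv> \<lambda>s. integral {0..s} (\<lambda>u. \<Theta> (u * L))"
  shows "\<forall>s\<ge>0. \<Theta> (s * L) = (\<chi> i. C $ i * exp (- L * (k - s *\<^sub>R r + M *v Z s) $ i))"
    and "lv_primitive M r k C L S Z"
proof -
  define \<phi> where "\<phi> u = \<Theta> (u * L)" for u
  have d\<phi>: "(\<phi> has_vector_derivative L *\<^sub>R (\<chi> i. \<phi> u $ i * (r $ i - (M *v \<phi> u) $ i)))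
      (at u within {0..T})" if "u \<in> {0..T}" for u T
  proof -
    have "(\<phi> has_vector_derivative L *\<^sub>R (\<chi> i. \<phi> u $ i * (r $ i - (M *v \<phi> u) $ i))) (at u within {0..})"
      unfolding \<phi>_def using ode that \<open>0 \<le> L\<close>
      by (intro has_vector_derivative_time_scaled[where F = "\<lambda>\<theta>. \<chi> i. \<theta> $ i * (r $ i - (M *v \<theta>) $ i)"])
        (auto simp: matrix_vector_mult_def)
    then show ?thesis
      by (rule has_vector_derivative_within_subset) auto
  qed
  have dZ: "(Z has_vector_derivative \<phi> u) (at u within {0..T})" if "u \<in> {0..T}" for u T
  proof -
    have "continuous_on {0..T} \<phi>"
      using d\<phi> by (meson continuous_on_eq_continuous_within has_vector_derivative_continuous)
    then show ?thesis
      unfolding Z_def \<phi>_def[symmetric] using that by (rule integral_has_vector_derivative)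
  qed
  have "Z 0 = 0"
    by (simp add: Z_def)
  have formula: "\<phi> s = (\<chi> i. C $ i * exp (- L * (k - s *\<^sub>R r + M *v Z s) $ i))" if "0 \<le> s" for s
  proof -
    have "\<phi> s $ i = \<phi> 0 $ i * exp (L * (s * r $ i - (M *v Z s) $ i))" for i
      using d\<phi> dZ \<open>Z 0 = 0\<close> that by (intro lotka_volterra_exp_integral[of s \<phi> L r M Z]) auto
    then show ?thesis
      by (simp add: vec_eq_iff \<phi>_def init algebra_simps flip: exp_add)
  qed
  then show "\<forall>s\<ge>0. \<Theta> (s * L) = (\<chi> i. C $ i * exp (- L * (k - s *\<^sub>R r + M *v Z s) $ i))"
    by (simp add: \<phi>_def)
  show "lv_primitive M r k C L S Z"
    unfolding lv_primitive_def using \<open>Z 0 = 0\<close> dZ formula by auto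
qed

lemma eventually_lotka_volterra_rescaled:
  fixes \<theta> :: "real \<Rightarrow> real \<Rightarrow> real^'n"
  assumes ode: "\<And>\<epsilon> t. 0 < \<epsilon> \<Longrightarrow> 0 \<le> t \<Longrightarrow> (\<theta> \<epsilon> has_vector_derivative
      (\<chi> i. \<theta> \<epsilon> t $ i * (r $ i - (\<Sum>j\<in>UNIV. M $ i $ j * \<theta> \<epsilon> t $ j)))) (at t within {0..})"
    and init: "\<And>\<epsilon>. 0 < \<epsilon> \<Longrightarrow> \<theta> \<epsilon> 0 = (\<chi> i. C $ i * \<epsilon> powr (k $ i))"
    and C: "\<And>i. 0 < C $ i"
  defines "Z \<equiv> \<lambda>\<epsilon> s. integral {0..s} (\<lambda>u. \<theta> \<epsilon> (u * ln (1 / \<epsilon>)))"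
  shows "\<forall>\<^sub>F \<epsilon> in at_right 0. (\<forall>S. lv_primitive M r k C (ln (1 / \<epsilon>)) S (Z \<epsilon>)) \<and>
    (\<forall>s\<ge>0. (\<chi> i. ln (\<theta> \<epsilon> (s * ln (1 / \<epsilon>)) $ i) / ln \<epsilon>)
       = k - s *\<^sub>R r + M *v Z \<epsilon> s - inverse (ln (1 / \<epsilon>)) *\<^sub>R (\<chi> i. ln (C $ i)))"
proof -
  have "\<forall>\<^sub>F \<epsilon> in at_right 0. 0 < \<epsilon> \<and> \<epsilon> < (1::real)"
    unfolding eventually_conj_iff by (intro conjI eventually_at_right_less) real_asymp
  then show ?thesis
  proof eventually_elim
    case (elim \<epsilon>)
    then have "0 < \<epsilon>"
      by simp
    define L where "L = ln (1 / \<epsilon>)"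
    have "0 < L" "ln \<epsilon> = - L"
      using elim by (simp_all add: L_def ln_div)
    have init': "\<theta> \<epsilon> 0 = (\<chi> i. C $ i * exp (- L * k $ i))"
      using elim by (simp add: init powr_def L_def ln_div mult.commute)
    have formula: "\<forall>s\<ge>0. \<theta> \<epsilon> (s * L)
        = (\<chi> i. C $ i * exp (- L * (k - s *\<^sub>R r + M *v integral {0..s} (\<lambda>u. \<theta> \<epsilon> (u * L))) $ i))"
      using ode[OF \<open>0 < \<epsilon>\<close>] init' less_imp_le[OF \<open>0 < L\<close>] by (rule lotka_volterra_rescaled(1))
    have primitive: "lv_primitive M r k C L S (\<lambda>s. integral {0..s} (\<lambda>u. \<theta> \<epsilon> (u * L)))" for S
      using ode[OF \<open>0 < \<epsilon>\<close>] init' less_imp_le[OF \<open>0 < L\<close>] by (rule lotka_volterra_rescaled(2))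
    have "ln (\<theta> \<epsilon> (s * L) $ i) / ln \<epsilon> = (k - s *\<^sub>R r + M *v Z \<epsilon> s) $ i - inverse L * ln (C $ i)"
      if "0 \<le> s" for s i
    proof -
      have "ln (\<theta> \<epsilon> (s * L) $ i) = ln (C $ i) - L * (k - s *\<^sub>R r + M *v Z \<epsilon> s) $ i"
        using formula that by (simp add: Z_def L_def ln_mult_pos[OF C exp_gt_zero])
      then show ?thesis
        using \<open>0 < L\<close> \<open>ln \<epsilon> = - L\<close> by (simp add: field_simps)
    qed
    with primitive show ?case
      by (simp add: vec_eq_iff Z_def L_def)
  qed
qed

lemma lv_primitive_continuous:
  "lv_primitive M r k C L S Z \<Longrightarrow> continuous_on {0..S} Z"
  unfolding lv_primitive_def
  by (meson continuous_on_eq_continuous_within has_vector_derivative_continuous)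

lemma lv_primitive_has_real_derivative:
  assumes "lv_primitive M r k C L S Z" "s \<in> {0..S}"
  shows "((\<lambda>s. Z s $ i) has_real_derivative C $ i * exp (- L * (k - s *\<^sub>R r + M *v Z s) $ i))
    (at s within {0..S})"
proof -
  have "(Z has_vector_derivative (\<chi> i. C $ i * exp (- L * (k - s *\<^sub>R r + M *v Z s) $ i)))
      (at s within {0..S})"
    using assms unfolding lv_primitive_def by auto
  from has_vector_derivative_vec_nth[OF this, of i] show ?thesis
    by simp
qed

lemma lv_primitive_nonneg:
  assumes Z: "lv_primitive M r k C L S Z" and C: "\<And>i. 0 \<le> C $ i" and s: "s \<in> {0..S}"
  shows "0 \<le> Z s $ j"
proof -
  have "Z 0 $ j \<le> Z s $ j"
  proof (rule DERIV_nonneg_imp_increasing_open[where f = "\<lambda>s. Z s $ j"])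
    show "continuous_on {0..s} (\<lambda>s. Z s $ j)"
      using lv_primitive_continuous[OF Z] s
      by (auto intro!: continuous_intros intro: continuous_on_subset)
    fix x assume x: "0 < x" "x < s"
    then have "((\<lambda>s. Z s $ j) has_real_derivative C $ j * exp (- L * (k - x *\<^sub>R r + M *v Z x) $ j))
        (at x within {0..S})"
      using s by (intro lv_primitive_has_real_derivative[OF Z]) auto
    moreover have "at x within {0..S} = at x"
      using x s by (intro at_within_interior) auto
    ultimately show "\<exists>y. ((\<lambda>s. Z s $ j) has_real_derivative y) (at x) \<and> 0 \<le> y"
      using C[of j] by auto
  qed (use s in auto)
  then show ?thesis
    using Z by (simp add: lv_primitive_def)
qed

lemma tendsto_imp_uniform_limit_const:
  "(f \<longlongrightarrow> l) F \<Longrightarrow> uniform_limit S (\<lambda>x _. f x) (\<lambda>_. l) F"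
  by (auto intro!: uniform_limitI dest: tendstoD)

section \<open>Comparison of rescaled trajectories with the LCP path\<close>

context Z_matrix_lcp_path
begin

text \<open>At the first time Z touches the barrier z(s) + \<eta> (1 + s) p, the touching coordinate
  of k - s r + M Z is at least \<eta>, so that coordinate of Z grows more slowly than the
  barrier.\<close>
lemma lv_primitive_below:
  assumes Z: "lv_primitive M r k C L S Z" and C: "\<And>i. 0 \<le> C $ i" and "0 \<le> L"
    and p: "\<And>j. 0 < p $ j" and Mp: "\<And>j. 1 \<le> (M *v p) $ j" and "0 < \<eta>"
    and small: "\<And>i. C $ i * exp (- L * \<eta>) < \<eta> * p $ i"
    and s: "s \<in> {0..S}"
  shows "Z s $ j < z s $ j + \<eta> * (1 + s) * p $ j"
proof (rule ccontr)
  define b where "b s = z s + (\<eta> * (1 + s)) *\<^sub>R p" for s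
  assume "\<not> ?thesis"
  then have reach: "b s $ j \<le> Z s $ j"
    by (simp add: b_def)
  have cont: "continuous_on {0..S} b"
    unfolding b_def by (intro continuous_intros continuous_on_z)
  have start: "Z 0 $ j < b 0 $ j" for j
    using Z p[of j] \<open>0 < \<eta>\<close> by (simp add: lv_primitive_def b_def z_at_0)
  obtain s1 i m where s1: "0 < s1" "s1 \<le> S" and "0 \<le> m"
    and touch: "Z s1 $ i = b s1 $ i + m * p $ i"
    and row: "(M *v b s1) $ i + m * (M *v p) $ i \<le> (M *v Z s1) $ i"
    and before: "\<And>s. 0 \<le> s \<Longrightarrow> s < s1 \<Longrightarrow> Z s $ i < b s $ i"
    by (rule Z_matrix_first_touch[OF Z_matrix p lv_primitive_continuous[OF Z] cont start s reach])
      (rule that)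
  define v where "v = (k - s1 *\<^sub>R r + M *v Z s1) $ i"
  have "\<eta> \<le> v"
  proof -
    have "\<eta> \<le> \<eta> * (1 + s1) * (M *v p) $ i"
      using Mp[of i] s1 \<open>0 < \<eta>\<close> mult_mono[of 1 "1 + s1" 1 "(M *v p) $ i"] by simp
    moreover have "0 \<le> m * (M *v p) $ i"
      using \<open>0 \<le> m\<close> Mp[of i] by simp
    ultimately show ?thesis
      using row w_nonneg[of s1 i] s1
      by (simp add: v_def b_def w_eq matrix_vector_right_distrib matrix_vector_mult_scaleR)
  qed
  then have "C $ i * exp (- L * v) \<le> C $ i * exp (- L * \<eta>)"
    using C[of i] \<open>0 \<le> L\<close> by (simp add: mult_left_mono)
  then have "C $ i * exp (- L * v) < \<eta> * p $ i"
    using small[of i] by linarith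
  moreover have "((\<lambda>s. Z s $ i) has_real_derivative C $ i * exp (- L * v)) (at s1 within {0..S})"
    unfolding v_def using s1 by (intro lv_primitive_has_real_derivative[OF Z]) auto
  ultimately obtain y where y: "0 \<le> y" "y < s1" "Z s1 $ i - Z y $ i < \<eta> * p $ i * (s1 - y)"
    using has_real_derivative_left_secant_less[OF _ s1] by blast
  have "z y $ i \<le> z s1 $ i"
    using y by (intro z_mono) auto
  moreover have "\<eta> * (1 + s1) * p $ i - \<eta> * p $ i * (s1 - y) = \<eta> * (1 + y) * p $ i"
    by (simp add: algebra_simps)
  moreover have "0 \<le> m * p $ i"
    using \<open>0 \<le> m\<close> p[of i] by simp
  ultimately have "b y $ i \<le> Z y $ i"
    using touch y(3) by (simp add: b_def)
  with before[OF y(1,2)] show False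
    by simp
qed

text \<open>At the first time Z touches the barrier z(s) - \<eta> p, the touching coordinate of z
  is positive, so complementarity gives w = 0 there and that coordinate of
  k - s r + M Z is at most -\<eta>; then Z grows faster than the Lipschitz function z.\<close>
lemma lv_primitive_above:
  assumes Z: "lv_primitive M r k C L S Z" and C: "\<And>i. 0 \<le> C $ i" and "0 \<le> L"
    and p: "\<And>j. 0 < p $ j" and Mp: "\<And>j. 1 \<le> (M *v p) $ j" and "0 < \<eta>"
    and \<Lambda>: "\<Lambda>-lipschitz_on {0..} z" and large: "\<And>i. \<Lambda> < C $ i * exp (L * \<eta>)"
    and s: "s \<in> {0..S}"
  shows "z s $ j - \<eta> * p $ j < Z s $ j"
proof (rule ccontr)
  define b where "b s = Z s + \<eta> *\<^sub>R p" for s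
  assume "\<not> ?thesis"
  then have reach: "b s $ j \<le> z s $ j"
    by (simp add: b_def)
  have cont: "continuous_on {0..S} b"
    unfolding b_def by (intro continuous_intros lv_primitive_continuous[OF Z])
  have start: "z 0 $ j < b 0 $ j" for j
    using Z p[of j] \<open>0 < \<eta>\<close> by (simp add: lv_primitive_def b_def z_at_0)
  obtain s1 i m where s1: "0 < s1" "s1 \<le> S" and "0 \<le> m"
    and touch: "z s1 $ i = b s1 $ i + m * p $ i"
    and row: "(M *v b s1) $ i + m * (M *v p) $ i \<le> (M *v z s1) $ i"
    and before: "\<And>s. 0 \<le> s \<Longrightarrow> s < s1 \<Longrightarrow> z s $ i < b s $ i"
    by (rule Z_matrix_first_touch[OF Z_matrix p continuous_on_z cont start s reach]) (rule that)
  have "0 < \<eta> * p $ i" "0 \<le> m * p $ i"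
    using p[of i] \<open>0 < \<eta>\<close> \<open>0 \<le> m\<close> by simp_all
  then have "0 < z s1 $ i"
    using touch lv_primitive_nonneg[OF Z C, of s1 i] s1 by (simp add: b_def)
  then have "w s1 $ i = 0"
    using s1 w_eq_0_if_z_pos by simp
  define v where "v = (k - s1 *\<^sub>R r + M *v Z s1) $ i"
  have "v \<le> - \<eta>"
  proof -
    have "\<eta> \<le> \<eta> * (M *v p) $ i"
      using Mp[of i] \<open>0 < \<eta>\<close> mult_left_mono[of 1 "(M *v p) $ i" \<eta>] by simp
    moreover have "0 \<le> m * (M *v p) $ i"
      using \<open>0 \<le> m\<close> Mp[of i] by simp
    ultimately show ?thesis
      using row \<open>w s1 $ i = 0\<close> s1
      by (simp add: v_def b_def w_eq matrix_vector_right_distrib matrix_vector_mult_scaleR)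
  qed
  then have "L * \<eta> \<le> - L * v"
    using mult_left_mono[of \<eta> "- v" L] \<open>0 \<le> L\<close> by simp
  then have "C $ i * exp (L * \<eta>) \<le> C $ i * exp (- L * v)"
    using C[of i] by (simp add: mult_left_mono)
  then have "\<Lambda> < C $ i * exp (- L * v)"
    using large[of i] by linarith
  moreover have "((\<lambda>s. Z s $ i) has_real_derivative C $ i * exp (- L * v)) (at s1 within {0..S})"
    unfolding v_def using s1 by (intro lv_primitive_has_real_derivative[OF Z]) auto
  ultimately obtain y where y: "0 \<le> y" "y < s1" "\<Lambda> * (s1 - y) < Z s1 $ i - Z y $ i"
    using has_real_derivative_left_secant_greater[OF _ s1] by blast
  have "z s1 $ i - z y $ i \<le> norm (z s1 - z y)"
    using component_le_norm_cart[of "z s1 - z y" i] by simp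
  also have "\<dots> \<le> \<Lambda> * (s1 - y)"
    using lipschitz_onD[OF \<Lambda>, of s1 y] y by (simp add: dist_norm)
  finally have "b y $ i \<le> z y $ i"
    using touch y(3) \<open>0 \<le> m * p $ i\<close> by (simp add: b_def)
  with before[OF y(1,2)] show False
    by simp
qed

lemma lv_primitive_uniform_estimate:
  assumes C: "\<And>i. 0 < C $ i" and "0 \<le> S" and "0 < e"
  shows "\<forall>\<^sub>F L in at_top. \<forall>Z. lv_primitive M r k C L S Z \<longrightarrow> (\<forall>s\<in>{0..S}. norm (Z s - z s) \<le> e)"
proof -
  obtain p where p: "\<And>j. 0 < p $ j" and Mp: "\<And>j. 1 \<le> (M *v p) $ j"
    using obtain_semipositive_vector by blast
  obtain \<Lambda> where \<Lambda>: "\<Lambda>-lipschitz_on {0..} z"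
    using z_lipschitz by blast
  define P where "P = (\<Sum>j\<in>UNIV. p $ j)"
  have "0 < P"
    unfolding P_def using p by (simp add: sum_pos)
  define \<eta> where "\<eta> = e / ((1 + S) * P)"
  have "0 < \<eta>"
    using \<open>0 < e\<close> \<open>0 \<le> S\<close> \<open>0 < P\<close> by (simp add: \<eta>_def)
  have "\<forall>\<^sub>F L in at_top. C $ i * exp (- L * \<eta>) < \<eta> * p $ i \<and> \<Lambda> < C $ i * exp (L * \<eta>)" for i
  proof -
    have "0 < C $ i" "0 < \<eta> * p $ i"
      using C p \<open>0 < \<eta>\<close> by simp_all
    with \<open>0 < \<eta>\<close> show ?thesis
      unfolding eventually_conj_iff by (intro conjI) real_asymp+
  qed
  then have "\<forall>\<^sub>F L in at_top. 0 \<le> L \<and> (\<forall>i. C $ i * exp (- L * \<eta>) < \<eta> * p $ i \<and> \<Lambda> < C $ i * exp (L * \<eta>))"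
    by (simp add: eventually_conj_iff eventually_all_finite eventually_ge_at_top)
  then show ?thesis
  proof eventually_elim
    case (elim L)
    show ?case
    proof (intro allI impI ballI)
      fix Z s assume Z: "lv_primitive M r k C L S Z" and s: "s \<in> {0..S}"
      have "\<bar>(Z s - z s) $ j\<bar> \<le> \<eta> * (1 + S) * p $ j" for j
      proof -
        have "Z s $ j < z s $ j + \<eta> * (1 + s) * p $ j"
          using elim C p Mp \<open>0 < \<eta>\<close> s by (intro lv_primitive_below[OF Z]) (auto intro: less_imp_le)
        moreover have "z s $ j - \<eta> * p $ j < Z s $ j"
          using elim C p Mp \<open>0 < \<eta>\<close> \<Lambda> s by (intro lv_primitive_above[OF Z]) (auto intro: less_imp_le)
        moreover have "\<eta> * p $ j \<le> \<eta> * (1 + s) * p $ j" "\<eta> * (1 + s) * p $ j \<le> \<eta> * (1 + S) * p $ j"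
          using s p[of j] \<open>0 < \<eta>\<close> by (simp_all add: mult_right_mono)
        ultimately show ?thesis
          by simp
      qed
      then have "norm (Z s - z s) \<le> (\<Sum>j\<in>UNIV. \<eta> * (1 + S) * p $ j)"
        by (intro order_trans[OF norm_le_l1_cart] sum_mono)
      also have "\<dots> = \<eta> * (1 + S) * P"
        by (simp add: P_def sum_distrib_left)
      also have "\<dots> = e"
        using \<open>0 \<le> S\<close> \<open>0 < P\<close> by (simp add: \<eta>_def)
      finally show "norm (Z s - z s) \<le> e" .
    qed
  qed
qed

lemma uniform_limit_lv_primitive:
  assumes C: "\<And>i. 0 < C $ i" and "0 \<le> S" and L: "filterlim L at_top F"
    and Z: "\<forall>\<^sub>F x in F. lv_primitive M r k C (L x) S (Z x)"
  shows "uniform_limit {0..S} Z z F"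
proof (rule uniform_limitI)
  fix e :: real assume "0 < e"
  then have "0 < e / 2"
    by simp
  from eventually_compose_filterlim[OF lv_primitive_uniform_estimate[OF C \<open>0 \<le> S\<close> this] L]
  have "\<forall>\<^sub>F x in F. \<forall>Z. lv_primitive M r k C (L x) S Z \<longrightarrow> (\<forall>s\<in>{0..S}. norm (Z s - z s) \<le> e / 2)" .
  with Z show "\<forall>\<^sub>F x in F. \<forall>s\<in>{0..S}. dist (Z x s) (z s) < e"
    by eventually_elim (use \<open>0 < e\<close> in \<open>fastforce simp: dist_norm\<close>)
qed

lemma uniform_limit_w:
  assumes Z: "uniform_limit {0..S} Z z F" and L: "filterlim L at_top F"
  shows "uniform_limit {0..S} (\<lambda>x s. k - s *\<^sub>R r + M *v Z x s - inverse (L x) *\<^sub>R c) w F"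
proof -
  have "uniform_limit {0..S} (\<lambda>x s. k - s *\<^sub>R r + M *v Z x s - inverse (L x) *\<^sub>R c)
      (\<lambda>s. k - s *\<^sub>R r + M *v z s - 0 *\<^sub>R c) F"
    by (intro uniform_limit_intros bounded_linear.uniform_limit[OF matrix_vector_mul_bounded_linear]
        Z tendsto_imp_uniform_limit_const tendsto_inverse_0_at_top L)
  then show ?thesis
    by (rule uniform_limit_cong'[THEN iffD1, rotated 2]) (auto simp: w_eq)
qed

end

theorem proposition4:
  fixes X :: "real^'d^'n" and y :: "real^'n"
    and M :: "real^'d^'d" and r :: "real^'d"
    and C k :: "real^'d"
    and \<theta> :: "real \<Rightarrow> real \<Rightarrow> real^'d"
    and w z :: "real \<Rightarrow> real^'d"
  assumes M_def: "M = transpose X ** X"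
    and r_def: "r = transpose X *v y"
    and A1: "\<forall>i. r $ i > 0"
    and A2: "\<forall>i j. i \<noteq> j \<longrightarrow> M $ i $ j \<le> 0"
    and C_pos: "\<forall>i. C $ i > 0"
    and k_pos: "\<forall>i. k $ i > 0"
    and ode: "\<And>\<epsilon> t. \<epsilon> > 0 \<Longrightarrow> t \<ge> 0 \<Longrightarrow>
       (\<theta> \<epsilon> has_vector_derivative
          (\<chi> i. \<theta> \<epsilon> t $ i * (r $ i - (\<Sum>j\<in>UNIV. M $ i $ j * \<theta> \<epsilon> t $ j))))
       (at t within {0..})"
    and init: "\<And>\<epsilon>. \<epsilon> > 0 \<Longrightarrow> \<theta> \<epsilon> 0 = (\<chi> i. C $ i * \<epsilon> powr (k $ i))"
    and lcp_eq: "\<And>s. s \<ge> 0 \<Longrightarrow> w s = k - s *\<^sub>R r + M *v z s"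
    and lcp_w: "\<And>s. s \<ge> 0 \<Longrightarrow> \<forall>i. w s $ i \<ge> 0"
    and lcp_z: "\<And>s. s \<ge> 0 \<Longrightarrow> \<forall>i. z s $ i \<ge> 0"
    and lcp_compl: "\<And>s. s \<ge> 0 \<Longrightarrow> w s \<bullet> z s = 0"
  shows "\<forall>K. compact K \<and> K \<subseteq> {0..} \<longrightarrow>
           uniform_limit K
             (\<lambda>\<epsilon> s. \<chi> i. ln (\<theta> \<epsilon> (s * ln (1 / \<epsilon>)) $ i) / ln \<epsilon>) w (at_right 0)
         \<and> uniform_limit K
             (\<lambda>\<epsilon> s. integral {0..s} (\<lambda>u. \<theta> \<epsilon> (u * ln (1 / \<epsilon>)))) z (at_right 0)"
proof (intro allI impI)
  interpret Z_matrix_lcp_path M r k w z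
    using A1 A2 k_pos lcp_eq lcp_w lcp_z lcp_compl
    by unfold_locales (auto simp: Z_matrix_def lcp_solution_def)
  define Z where "Z = (\<lambda>\<epsilon> s. integral {0..s} (\<lambda>u. \<theta> \<epsilon> (u * ln (1 / \<epsilon>))))"
  have L: "filterlim (\<lambda>\<epsilon>. ln (1 / \<epsilon>)) at_top (at_right (0::real))"
    by real_asymp
  have rescaled: "\<forall>\<^sub>F \<epsilon> in at_right 0. (\<forall>S. lv_primitive M r k C (ln (1 / \<epsilon>)) S (Z \<epsilon>)) \<and>
      (\<forall>s\<ge>0. (\<chi> i. ln (\<theta> \<epsilon> (s * ln (1 / \<epsilon>)) $ i) / ln \<epsilon>)
         = k - s *\<^sub>R r + M *v Z \<epsilon> s - inverse (ln (1 / \<epsilon>)) *\<^sub>R (\<chi> i. ln (C $ i)))"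
    unfolding Z_def by (rule eventually_lotka_volterra_rescaled[OF ode init C_pos[rule_format]])
  fix K :: "real set" assume K: "compact K \<and> K \<subseteq> {0..}"
  then obtain a where "\<forall>x\<in>K. \<bar>x\<bar> \<le> a"
    using compact_imp_bounded bounded_real by metis
  define S where "S = max 0 a"
  with K \<open>\<forall>x\<in>K. \<bar>x\<bar> \<le> a\<close> have KS: "K \<subseteq> {0..S}" and "0 \<le> S"
    by force+
  have Zlim: "uniform_limit {0..S} Z z (at_right 0)"
    using rescaled by (intro uniform_limit_lv_primitive[OF C_pos[rule_format] \<open>0 \<le> S\<close> L])
      (auto elim: eventually_mono)
  have "uniform_limit {0..S} (\<lambda>\<epsilon> s. \<chi> i. ln (\<theta> \<epsilon> (s * ln (1 / \<epsilon>)) $ i) / ln \<epsilon>) w (at_right 0)"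
    using rescaled by (intro uniform_limit_cong[THEN iffD2, OF _ refl uniform_limit_w[OF Zlim L]])
      (auto elim: eventually_mono)
  with Zlim KS show "uniform_limit K (\<lambda>\<epsilon> s. \<chi> i. ln (\<theta> \<epsilon> (s * ln (1 / \<epsilon>)) $ i) / ln \<epsilon>) w (at_right 0)
      \<and> uniform_limit K (\<lambda>\<epsilon> s. integral {0..s} (\<lambda>u. \<theta> \<epsilon> (u * ln (1 / \<epsilon>)))) z (at_right 0)"
    unfolding Z_def by (blast intro: uniform_limit_on_subset)
qed

end
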